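(* Let $L>0$ be fixed, $c_{cr}=4/L^2$, and let the constant renormalized force be $F=cN$ with $c>c_{cr}$. Then for all sufficiently large $N$ the fixed point satisfies $x_N>-L$, and $x_N\to-\frac{2}{\sqrt c}$ as $N\to\infty$. The density $\rho$ of the fixed points exists, vanishes on $[-L,-\frac2{\sqrt c})$, and is not constant on $(-\frac2{\sqrt c},0)$.
   Context: A configuration consists of $N+1$ point particles $-L\le x_N<\dots<x_1<x_0\le 0$ on $[-L,0]$ with potential energy $U=\sum_{i=1}^{N}\frac{\alpha_{int}}{x_{i-1}-x_i}-\sum_{i=0}^{N}\int_{-L}^{x_i}\alpha_{ext}F_0\,dx$, $\alpha_{int},\alpha_{ext}>0$, with constant $F_0>0$; the renormalized force is the constant $F=\frac{\alpha_{ext}}{\alpha_{int}}F_0$, which may depend on $N$ (the external force pushes particles towards $0$). Write $\delta_k=x_{k-1}-x_k$, $f_k=\delta_k^{-2}$. The walls at $0,-L$ are completely inelastic. A fixed point is a configuration with $x_0=0$, $f_{k+1}+F=f_k$ for $k=1,\dots,N-1$, and either $x_N=-L$ with $f_N\ge F$, or $x_N>-L$ with $f_N=F$; it exists and is unique. The density $\rho$ of the fixed points (as $N\to\infty$) is a function on $[-L,0]$ such that for every subinterval $I\subset[-L,0]$, $\int_I\rho(x)\,dx=\lim_{N\to\infty}\frac{\#\{i:x_i\in I\}}{N}$. *)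

theory Defs
  imports "HOL-Analysis.Analysis"
begin

text \<open>A configuration of N+1 particles is a function x :: nat => real, only the
values x 0, ..., x N being relevant.  delta_k = x (k-1) - x k, f_k = delta_k^(-2).\<close>

definition fp_f :: "(nat \<Rightarrow> real) \<Rightarrow> nat \<Rightarrow> real" where
  "fp_f x k = 1 / (x (k - 1) - x k)^2"

definition is_fixed_point :: "nat \<Rightarrow> real \<Rightarrow> real \<Rightarrow> (nat \<Rightarrow> real) \<Rightarrow> bool" where
  "is_fixed_point N L F x \<longleftrightarrow>
     -L \<le> x N \<and> (\<forall>i<N. x (Suc i) < x i) \<and> x 0 = 0 \<and>
     (\<forall>k\<in>{1..<N}. fp_f x (k + 1) + F = fp_f x k) \<and>
     ((x N = -L \<and> fp_f x N \<ge> F) \<or> (x N > -L \<and> fp_f x N = F))"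

definition is_fp_density :: "real \<Rightarrow> (nat \<Rightarrow> nat \<Rightarrow> real) \<Rightarrow> (real \<Rightarrow> real) \<Rightarrow> bool" where
  "is_fp_density L X \<rho> \<longleftrightarrow>
     (\<forall>a b. -L \<le> a \<longrightarrow> a \<le> b \<longrightarrow> b \<le> 0 \<longrightarrow>
        \<rho> integrable_on {a..b} \<and>
        ((\<lambda>N. real (card {i\<in>{0..N}. X N i \<in> {a..b}}) / real N)
            \<longlongrightarrow> integral {a..b} \<rho>) sequentially)"

end

theory Submission
  imports Defs
begin

text \<open>At a fixed point the recursion f(k+1) + F = f(k) gives f(k) = f(N) + (N - k) F, so the gaps
are (f(N) + (N - k) F)^(-1/2). Even for f(N) = F they add up to at most
sum over m \<le> N of (m F)^(-1/2) \<le> 2 sqrt N / sqrt F = 2 / sqrt c < L, so the last particle never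
reaches the wall, f(N) = F, and x(i) = -(H(N) - H(N - i)) / sqrt (c N), where
H(m) = sum over j \<le> m of j^(-1/2) = 2 sqrt m + O(1). Hence the positions lie within O(N^(-1/2)) of
-(2 sqrt N - 2 sqrt (N - i)) / sqrt (c N); inverting this, the fraction of particles in [-T, 0]
tends to 1 - max 0 (1 - T sqrt c / 2)^2, whose derivative sqrt c * max 0 (1 + t sqrt c / 2) is the
density: zero left of -2 / sqrt c and strictly increasing to its right.\<close>

definition sqrt_harmonic :: "nat \<Rightarrow> real" where
  "sqrt_harmonic m = (\<Sum>j=1..m. 1 / sqrt (real j))"

lemma sqrt_harmonic_0 [simp]: "sqrt_harmonic 0 = 0"
  by (simp add: sqrt_harmonic_def)

lemma sqrt_harmonic_Suc: "sqrt_harmonic (Suc m) = sqrt_harmonic m + 1 / sqrt (real (Suc m))"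
  by (simp add: sqrt_harmonic_def)

lemma sqrt_harmonic_le: "sqrt_harmonic m \<le> 2 * sqrt (real m)"
proof (induction m)
  case 0
  then show ?case by simp
next
  case (Suc m)
  have "sqrt (real m) * sqrt (real m + 1) = sqrt (real m * (real m + 1))"
    by (simp add: real_sqrt_mult)
  also have "\<dots> \<le> real m + 1/2"
    by (rule real_le_lsqrt) (auto simp: power2_eq_square algebra_simps)
  finally have "1 / sqrt (real m + 1) \<le> 2 * sqrt (real m + 1) - 2 * sqrt (real m)"
    by (simp add: field_simps)
  with Suc show ?case
    by (simp add: sqrt_harmonic_Suc add.commute)
qed

lemma sqrt_harmonic_ge: "2 * sqrt (real m + 1) - 2 \<le> sqrt_harmonic m"
proof (induction m)
  case 0
  then show ?case by simp
next
  case (Suc m)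
  have "sqrt (real m + 2) * sqrt (real m + 1) = sqrt ((real m + 2) * (real m + 1))"
    by (simp add: real_sqrt_mult)
  also have "\<dots> \<le> real m + 3/2"
    by (rule real_le_lsqrt) (auto simp: power2_eq_square algebra_simps)
  finally have "2 * sqrt (real m + 2) - 2 * sqrt (real m + 1) \<le> 1 / sqrt (real m + 1)"
    by (simp add: field_simps)
  with Suc show ?case
    by (simp add: sqrt_harmonic_Suc add.commute)
qed

lemma sqrt_harmonic_approx: "\<bar>sqrt_harmonic m - 2 * sqrt (real m)\<bar> \<le> 2"
  using sqrt_harmonic_le[of m] sqrt_harmonic_ge[of m] real_sqrt_le_mono[of "real m" "real m + 1"]
  by linarith

lemma sqrt_harmonic_diff:
  "i \<le> N \<Longrightarrow> sqrt_harmonic N - sqrt_harmonic (N - i) = (\<Sum>k=1..i. 1 / sqrt (real (N - k + 1)))"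
proof (induction i)
  case 0
  then show ?case by simp
next
  case (Suc i)
  then have "sqrt_harmonic (N - i) = sqrt_harmonic (N - Suc i) + 1 / sqrt (real (N - i))"
    using sqrt_harmonic_Suc[of "N - Suc i"] by (simp add: Suc_diff_Suc)
  with Suc show ?case
    by (simp add: Suc_diff_Suc)
qed

lemma neg_eq_sum_gaps:
  fixes x :: "nat \<Rightarrow> real"
  assumes "x 0 = 0"
  shows "- x i = (\<Sum>k=1..i. x (k - 1) - x k)"
  by (induction i) (simp_all add: assms)

lemma gap_eq_inverse_sqrt_fp_f:
  fixes x :: "nat \<Rightarrow> real"
  assumes "x k < x (k - 1)"
  shows "x (k - 1) - x k = 1 / sqrt (fp_f x k)"
  using assms by (simp add: fp_f_def real_sqrt_divide)

lemma fixed_point_fp_f: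
  assumes fp: "is_fixed_point N L F x" and k: "k \<in> {1..N}"
  shows "fp_f x k = fp_f x N + real (N - k) * F"
proof -
  have "fp_f x (N - d) = fp_f x N + real d * F" if "d < N" for d
    using that
  proof (induction d)
    case 0
    then show ?case by simp
  next
    case (Suc d)
    then have "N - Suc d \<in> {1..<N}" and "N - Suc d + 1 = N - d"
      by auto
    with fp have "fp_f x (N - d) + F = fp_f x (N - Suc d)"
      unfolding is_fixed_point_def by metis
    with Suc show ?case
      by (simp add: algebra_simps)
  qed
  from this[of "N - k"] k show ?thesis
    by simp
qed

lemma fixed_point_position:
  assumes fp: "is_fixed_point N L F x" and i: "i \<le> N"
  shows "- x i = (\<Sum>k=1..i. 1 / sqrt (fp_f x N + real (N - k) * F))"
proof -
  have x0: "x 0 = 0" and decr: "\<forall>i<N. x (Suc i) < x i"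
    using fp by (auto simp: is_fixed_point_def)
  from x0 have "- x i = (\<Sum>k=1..i. x (k - 1) - x k)"
    by (rule neg_eq_sum_gaps)
  also have "\<dots> = (\<Sum>k=1..i. 1 / sqrt (fp_f x N + real (N - k) * F))"
  proof (rule sum.cong)
    fix k assume k: "k \<in> {1..i}"
    with i have "k - 1 < N" and "Suc (k - 1) = k"
      by auto
    with decr have "x k < x (k - 1)"
      by metis
    then have "x (k - 1) - x k = 1 / sqrt (fp_f x k)"
      by (rule gap_eq_inverse_sqrt_fp_f)
    also from k i have "fp_f x k = fp_f x N + real (N - k) * F"
      by (intro fixed_point_fp_f[OF fp]) auto
    finally show "x (k - 1) - x k = 1 / sqrt (fp_f x N + real (N - k) * F)" .
  qed simp
  finally show ?thesis .
qed

lemma sum_inverse_sqrt_multiples: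
  assumes "i \<le> N" "F \<ge> 0"
  shows "(\<Sum>k=1..i. 1 / sqrt (real (N - k + 1) * F)) = (sqrt_harmonic N - sqrt_harmonic (N - i)) / sqrt F"
  using assms by (simp add: sqrt_harmonic_diff sum_divide_distrib real_sqrt_mult)

lemma two_div_sqrt_less:
  fixes L c :: real
  assumes "L > 0" "c > 4 / L^2"
  shows "2 / sqrt c < L"
proof -
  have "(2 / L)^2 < c"
    using assms by (simp add: power_divide)
  then have "2 / L < sqrt c"
    by (rule real_less_rsqrt)
  moreover from assms have "2 / L > 0"
    by simp
  ultimately have "sqrt c > 0"
    by linarith
  with \<open>2 / L < sqrt c\<close> \<open>L > 0\<close> show ?thesis
    by (simp add: field_simps)
qed

lemma fixed_point_scaled_force:
  fixes L c :: real
  assumes c: "c > 0" and L: "2 / sqrt c < L" and N: "N \<ge> 1"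
    and fp: "is_fixed_point N L (c * real N) x"
  shows "x N > -L"
    and "i \<le> N \<Longrightarrow> - x i = (sqrt_harmonic N - sqrt_harmonic (N - i)) / sqrt (c * real N)"
proof -
  define F where "F = c * real N"
  from c N have F: "F > 0"
    by (simp add: F_def)
  have boundary: "(x N = -L \<and> fp_f x N \<ge> F) \<or> (x N > -L \<and> fp_f x N = F)"
    using fp by (simp add: is_fixed_point_def F_def)
  have "- x N \<le> (sqrt_harmonic N - sqrt_harmonic (N - N)) / sqrt F"
  proof -
    have "- x N = (\<Sum>k=1..N. 1 / sqrt (fp_f x N + real (N - k) * F))"
      using fixed_point_position[OF fp[folded F_def]] by simp
    also have "\<dots> \<le> (\<Sum>k=1..N. 1 / sqrt (real (N - k + 1) * F))"
    proof (rule sum_mono)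
      fix k assume "k \<in> {1..N}"
      with F have "0 < real (N - k + 1) * F"
        by simp
      moreover from boundary have "real (N - k + 1) * F \<le> fp_f x N + real (N - k) * F"
        by (auto simp: algebra_simps)
      ultimately show "1 / sqrt (fp_f x N + real (N - k) * F) \<le> 1 / sqrt (real (N - k + 1) * F)"
        by (intro divide_left_mono real_sqrt_le_mono) auto
    qed
    also have "\<dots> = (sqrt_harmonic N - sqrt_harmonic (N - N)) / sqrt F"
      using F by (intro sum_inverse_sqrt_multiples) auto
    finally show ?thesis .
  qed
  also have "\<dots> \<le> 2 * sqrt (real N) / sqrt F"
    using sqrt_harmonic_le[of N] F by (simp add: divide_right_mono)
  also have "\<dots> = 2 / sqrt c"
    using N c by (simp add: F_def real_sqrt_mult)
  also have "\<dots> < L"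
    by (rule L)
  finally show xN: "x N > -L"
    by simp
  with boundary have fN: "fp_f x N = F"
    by auto
  assume i: "i \<le> N"
  have "- x i = (\<Sum>k=1..i. 1 / sqrt (fp_f x N + real (N - k) * F))"
    using fixed_point_position[OF fp[folded F_def] i] .
  also have "\<dots> = (\<Sum>k=1..i. 1 / sqrt (real (N - k + 1) * F))"
    by (simp add: fN algebra_simps)
  also have "\<dots> = (sqrt_harmonic N - sqrt_harmonic (N - i)) / sqrt F"
    using i F by (intro sum_inverse_sqrt_multiples) auto
  finally show "- x i = (sqrt_harmonic N - sqrt_harmonic (N - i)) / sqrt (c * real N)"
    by (simp add: F_def)
qed

text \<open>Distance from the wall of particle i when sqrt_harmonic m is replaced by 2 sqrt m.\<close>

definition continuum_position :: "real \<Rightarrow> nat \<Rightarrow> nat \<Rightarrow> real" where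
  "continuum_position c N i = (2 * sqrt (real N) - 2 * sqrt (real (N - i))) / sqrt (c * real N)"

text \<open>Limiting fraction of the particles at distance at most T from the wall.\<close>

definition limit_mass :: "real \<Rightarrow> real \<Rightarrow> real" where
  "limit_mass c T = 1 - (max 0 (1 - T * sqrt c / 2))^2"

lemma continuum_position_approx:
  assumes "c > 0" "N \<ge> 1"
  shows "\<bar>(sqrt_harmonic N - sqrt_harmonic (N - i)) / sqrt (c * real N) - continuum_position c N i\<bar>
           \<le> 4 / sqrt (c * real N)"
proof -
  have "\<bar>(sqrt_harmonic N - 2 * sqrt (real N)) - (sqrt_harmonic (N - i) - 2 * sqrt (real (N - i)))\<bar> \<le> 4"
    using sqrt_harmonic_approx[of N] sqrt_harmonic_approx[of "N - i"] by linarith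
  moreover have "sqrt (c * real N) > 0"
    using assms by simp
  ultimately show ?thesis
    by (simp add: continuum_position_def diff_divide_distrib[symmetric] abs_div divide_right_mono
        algebra_simps)
qed

lemma card_nat_le_real:
  fixes y :: real
  assumes "0 \<le> y"
  shows "card {i\<in>{0..N}. real i \<le> y} = Suc (min N (nat \<lfloor>y\<rfloor>))"
proof -
  have "{i\<in>{0..N}. real i \<le> y} = {0..min N (nat \<lfloor>y\<rfloor>)}"
  proof (rule set_eqI)
    fix i
    have "real i \<le> y \<longleftrightarrow> i \<le> nat \<lfloor>y\<rfloor>"
      using assms by (simp add: le_nat_iff le_floor_iff)
    then show "i \<in> {i\<in>{0..N}. real i \<le> y} \<longleftrightarrow> i \<in> {0..min N (nat \<lfloor>y\<rfloor>)}"
      by simp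
  qed
  then show ?thesis
    by simp
qed

lemma card_nat_le_real_ge:
  fixes y :: real
  assumes "y \<le> real N"
  shows "y \<le> card {i\<in>{0..N}. real i \<le> y}"
proof (cases "y \<ge> 0")
  case True
  with assms have "nat \<lfloor>y\<rfloor> \<le> N"
    by (simp add: nat_le_iff floor_le_iff)
  with True show ?thesis
    unfolding card_nat_le_real[OF True] by simp linarith
qed simp

lemma card_nat_le_real_le:
  fixes y :: real
  assumes "0 \<le> y"
  shows "card {i\<in>{0..N}. real i \<le> y} \<le> y + 1"
  unfolding card_nat_le_real[OF assms] using assms by simp linarith

lemma continuum_position_last:
  assumes "c > 0" "N \<ge> 1"
  shows "continuum_position c N N = 2 / sqrt c"
  using assms by (simp add: continuum_position_def real_sqrt_mult)

lemma continuum_position_le_last: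
  assumes "c > 0" "N \<ge> 1"
  shows "continuum_position c N i \<le> 2 / sqrt c"
proof -
  have "continuum_position c N i \<le> continuum_position c N N"
    using assms unfolding continuum_position_def by (intro divide_right_mono) auto
  with assms show ?thesis
    by (simp add: continuum_position_last)
qed

lemma continuum_position_le_iff:
  assumes c: "c > 0" and N: "N \<ge> 1" and i: "i \<le> N" and T: "1 - T * sqrt c / 2 > 0"
  shows "continuum_position c N i \<le> T \<longleftrightarrow> real i \<le> real N * limit_mass c T"
proof -
  define g where "g = 1 - T * sqrt c / 2"
  have "sqrt (c * real N) > 0"
    using c N by simp
  moreover have "T * sqrt (c * real N) = 2 * sqrt (real N) - 2 * (sqrt (real N) * g)"
    by (simp add: g_def real_sqrt_mult algebra_simps)
  ultimately have "continuum_position c N i \<le> T \<longleftrightarrow>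
      2 * sqrt (real N) - 2 * sqrt (real (N - i)) \<le> 2 * sqrt (real N) - 2 * (sqrt (real N) * g)"
    by (simp add: continuum_position_def pos_divide_le_eq)
  also have "\<dots> \<longleftrightarrow> sqrt (real N) * g \<le> sqrt (real (N - i))"
    by linarith
  also have "sqrt (real N) * g = sqrt (real N * g^2)"
    using T by (simp add: real_sqrt_mult g_def)
  also have "sqrt (real N * g^2) \<le> sqrt (real (N - i)) \<longleftrightarrow> real i \<le> real N * limit_mass c T"
    using i T by (simp add: limit_mass_def g_def[symmetric] of_nat_diff algebra_simps)
  finally show ?thesis .
qed

lemma card_continuum_position_ge:
  assumes "c > 0" "N \<ge> 1"
  shows "real N * limit_mass c T \<le> card {i\<in>{0..N}. continuum_position c N i \<le> T}"
proof (cases "1 - T * sqrt c / 2 > 0")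
  case True
  then have eq: "{i\<in>{0..N}. continuum_position c N i \<le> T} = {i\<in>{0..N}. real i \<le> real N * limit_mass c T}"
    using continuum_position_le_iff[OF assms] by auto
  have "limit_mass c T \<le> 1"
    by (simp add: limit_mass_def)
  then have "real N * limit_mass c T \<le> real N"
    by (simp add: mult_left_le)
  then show ?thesis
    unfolding eq by (rule card_nat_le_real_ge)
next
  case False
  with assms have "2 / sqrt c \<le> T"
    by (simp add: field_simps)
  then have "continuum_position c N i \<le> T" for i
    using continuum_position_le_last[OF assms, of i] by linarith
  then have "{i\<in>{0..N}. continuum_position c N i \<le> T} = {0..N}"
    by auto
  with False show ?thesis
    by (simp add: limit_mass_def)
qed

lemma card_continuum_position_le:
  assumes "c > 0" "N \<ge> 1" "T \<ge> 0"
  shows "card {i\<in>{0..N}. continuum_position c N i \<le> T} \<le> real N * limit_mass c T + 1"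
proof (cases "1 - T * sqrt c / 2 > 0")
  case True
  then have eq: "{i\<in>{0..N}. continuum_position c N i \<le> T} = {i\<in>{0..N}. real i \<le> real N * limit_mass c T}"
    using continuum_position_le_iff[OF assms(1,2)] by auto
  have "1 - T * sqrt c / 2 \<le> 1"
    using assms by simp
  with True have "limit_mass c T \<ge> 0"
    by (simp add: limit_mass_def power_le_one)
  then show ?thesis
    unfolding eq by (intro card_nat_le_real_le mult_nonneg_nonneg) simp_all
next
  case False
  have "card {i\<in>{0..N}. continuum_position c N i \<le> T} \<le> card {0..N}"
    by (intro card_mono) auto
  with False show ?thesis
    by (simp add: limit_mass_def)
qed

lemma tendsto_inverse_sqrt_scaled:
  assumes "c > 0"
  shows "((\<lambda>N. 4 / sqrt (c * real N)) \<longlongrightarrow> 0) sequentially"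
proof -
  have "((\<lambda>N. sqrt (1 / real N)) \<longlongrightarrow> sqrt 0) sequentially"
    by (intro tendsto_real_sqrt lim_const_over_n)
  then have "((\<lambda>N. 4 / sqrt c * (1 / sqrt (real N))) \<longlongrightarrow> 0) sequentially"
    by (intro tendsto_mult_right_zero) (simp add: real_sqrt_divide)
  then show ?thesis
    by (simp add: real_sqrt_mult)
qed

lemma isCont_limit_mass: "isCont (limit_mass c) T"
  unfolding limit_mass_def by (intro continuous_intros) auto

lemma card_fraction_tendsto_limit_mass:
  fixes S :: "nat \<Rightarrow> nat set"
  assumes c: "c > 0" and T: "T \<ge> 0"
    and lower: "\<And>N. N \<ge> 1 \<Longrightarrow>
      {i\<in>{0..N}. continuum_position c N i \<le> T - 2 * (4 / sqrt (c * real N))} \<subseteq> S N"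
    and upper: "\<And>N. N \<ge> 1 \<Longrightarrow>
      S N \<subseteq> {i\<in>{0..N}. continuum_position c N i \<le> T + 4 / sqrt (c * real N)}"
  shows "((\<lambda>N. card (S N) / real N) \<longlongrightarrow> limit_mass c T) sequentially"
proof (rule tendsto_sandwich)
  define e where "e N = 4 / sqrt (c * real N)" for N
  have e: "(e \<longlongrightarrow> 0) sequentially"
    unfolding e_def using c by (rule tendsto_inverse_sqrt_scaled)
  show "\<forall>\<^sub>F N in sequentially. limit_mass c (T - 2 * e N) \<le> card (S N) / real N"
    unfolding eventually_sequentially
  proof (intro exI allI impI)
    fix N :: nat assume N: "N \<ge> 1"
    have "finite (S N)"
      using upper[OF N] by (rule finite_subset) simp
    have "real N * limit_mass c (T - 2 * e N) \<le> card {i\<in>{0..N}. continuum_position c N i \<le> T - 2 * e N}"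
      using c N by (rule card_continuum_position_ge)
    also have "\<dots> \<le> card (S N)"
      using lower[OF N] \<open>finite (S N)\<close> unfolding e_def by (intro of_nat_mono card_mono)
    finally show "limit_mass c (T - 2 * e N) \<le> card (S N) / real N"
      using N by (simp add: field_simps)
  qed
  show "\<forall>\<^sub>F N in sequentially. card (S N) / real N \<le> limit_mass c (T + e N) + 1 / real N"
    unfolding eventually_sequentially
  proof (intro exI allI impI)
    fix N :: nat assume N: "N \<ge> 1"
    have "card (S N) \<le> card {i\<in>{0..N}. continuum_position c N i \<le> T + e N}"
      using upper[OF N] by (intro card_mono) (auto simp: e_def)
    also have "\<dots> \<le> real N * limit_mass c (T + e N) + 1"
      using c N T by (intro card_continuum_position_le) (auto simp: e_def)
    finally show "card (S N) / real N \<le> limit_mass c (T + e N) + 1 / real N"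
      using N by (simp add: field_simps)
  qed
  have "((\<lambda>N. T - 2 * e N) \<longlongrightarrow> T) sequentially"
    using tendsto_diff[OF tendsto_const tendsto_mult_right_zero[OF e], of T 2] by simp
  then show "((\<lambda>N. limit_mass c (T - 2 * e N)) \<longlongrightarrow> limit_mass c T) sequentially"
    by (rule isCont_tendsto_compose[OF isCont_limit_mass])
  have "((\<lambda>N. T + e N) \<longlongrightarrow> T) sequentially"
    using tendsto_add[OF tendsto_const e, of T] by simp
  from tendsto_add[OF isCont_tendsto_compose[OF isCont_limit_mass this] lim_const_over_n]
  show "((\<lambda>N. limit_mass c (T + e N) + 1 / real N) \<longlongrightarrow> limit_mass c T) sequentially"
    by simp
qed

lemma DERIV_max_zero_square:
  fixes u :: real
  shows "((\<lambda>u. (max 0 u)^2) has_real_derivative 2 * max 0 u) (at u)"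
proof -
  consider "u < 0" | "u = 0" | "u > 0"
    by linarith
  then show ?thesis
  proof cases
    case 1
    have "((\<lambda>u::real. 0) has_real_derivative 0) (at u)"
      by simp
    then have "((\<lambda>u. (max 0 u)^2) has_real_derivative 0) (at u)"
      by (rule has_field_derivative_transform_within_open[where S = "{..<0}"]) (use 1 in auto)
    with 1 show ?thesis
      by simp
  next
    case 2
    have "(\<lambda>y::real. ((max 0 y)^2 - (max 0 0)^2) / (y - 0)) = max 0"
      by (auto simp: max_def power2_eq_square)
    moreover have "((\<lambda>y::real. max 0 y) \<longlongrightarrow> max 0 0) (at 0)"
      by (intro tendsto_intros)
    ultimately show ?thesis
      using 2 by (simp add: has_field_derivative_iff)
  next
    case 3
    have "((\<lambda>u::real. u^2) has_real_derivative 2 * u) (at u)"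
      by (auto intro!: derivative_eq_intros)
    then have "((\<lambda>u. (max 0 u)^2) has_real_derivative 2 * u) (at u)"
      by (rule has_field_derivative_transform_within_open[where S = "{0<..}"]) (use 3 in auto)
    with 3 show ?thesis
      by simp
  qed
qed

definition fixed_point_density :: "real \<Rightarrow> real \<Rightarrow> real" where
  "fixed_point_density c t = sqrt c * max 0 (1 + t * sqrt c / 2)"

lemma fixed_point_density_has_integral:
  assumes "a \<le> b"
  shows "(fixed_point_density c has_integral limit_mass c (-a) - limit_mass c (-b)) {a..b}"
proof -
  define G where "G t = (max 0 (1 + t * sqrt c / 2))^2" for t
  have "(G has_real_derivative fixed_point_density c t) (at t)" for t
    unfolding G_def fixed_point_density_def
    by (rule DERIV_chain2[OF DERIV_max_zero_square, THEN DERIV_cong])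
       (auto intro!: derivative_eq_intros)
  then have "(fixed_point_density c has_integral G b - G a) {a..b}"
    using assms by (intro fundamental_theorem_of_calculus)
      (auto simp: has_real_derivative_iff_has_vector_derivative[symmetric] intro: has_field_derivative_at_within)
  then show ?thesis
    by (simp add: G_def limit_mass_def)
qed

lemma fixed_point_density_eq_0:
  assumes "c > 0" "x < - 2 / sqrt c"
  shows "fixed_point_density c x = 0"
  using assms by (simp add: fixed_point_density_def field_simps)

lemma strict_mono_on_fixed_point_density:
  assumes "c > 0"
  shows "strict_mono_on {- 2 / sqrt c<..<0} (fixed_point_density c)"
  using assms by (intro strict_mono_onI) (auto simp: fixed_point_density_def field_simps)

lemma not_AE_eq_const_if_strict_mono_on:
  fixes f :: "real \<Rightarrow> real"
  assumes "a < b" and mono: "strict_mono_on {a<..<b} f"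
  shows "\<not> (AE x in lborel. x \<in> {a<..<b} \<longrightarrow> f x = k)"
proof
  assume ae: "AE x in lborel. x \<in> {a<..<b} \<longrightarrow> f x = k"
  define m where "m = (a + b) / 2"
  have m: "m \<in> {a<..<b}"
    using \<open>a < b\<close> by (simp add: m_def)
  obtain l r where "l < r" and lr: "{l<..<r} \<subseteq> {a<..<b}" and ne: "\<forall>x\<in>{l<..<r}. f x \<noteq> k"
  proof (cases "k \<le> f m")
    case True
    have "f x \<noteq> k" if "x \<in> {m<..<b}" for x
      using mono m that True by (auto dest: strict_mono_onD[of _ f m x])
    with m show ?thesis
      by (intro that[of m b]) auto
  next
    case False
    have "f x \<noteq> k" if "x \<in> {a<..<m}" for x
      using mono m that False by (auto dest: strict_mono_onD[of _ f x m])
    with m show ?thesis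
      by (intro that[of a m]) auto
  qed
  from ae have "AE x in lborel. x \<notin> {l<..<r}"
    by eventually_elim (use lr ne in auto)
  then have "emeasure lborel {l<..<r} = 0"
    by (subst (asm) AE_iff_measurable[of "{l<..<r}"]) auto
  with \<open>l < r\<close> show False
    by simp
qed

context
  fixes c :: real and X :: "nat \<Rightarrow> nat \<Rightarrow> real"
  assumes c: "c > 0"
    and close: "\<And>N i. N \<ge> 1 \<Longrightarrow> i \<le> N \<Longrightarrow>
      \<bar>- X N i - continuum_position c N i\<bar> \<le> 4 / sqrt (c * real N)"
begin

lemma card_fraction_below_tendsto:
  assumes T: "T \<ge> 0" and "\<And>t. t < T \<Longrightarrow> R t" and "\<And>t. R t \<Longrightarrow> t \<le> T"
  shows "((\<lambda>N. card {i\<in>{0..N}. R (- X N i)} / real N) \<longlongrightarrow> limit_mass c T) sequentially"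
  using c T
proof (rule card_fraction_tendsto_limit_mass)
  fix N :: nat assume N: "N \<ge> 1"
  define e where "e = 4 / sqrt (c * real N)"
  have "e > 0"
    using c N by (simp add: e_def)
  show "{i\<in>{0..N}. continuum_position c N i \<le> T - 2 * e} \<subseteq> {i\<in>{0..N}. R (- X N i)}"
  proof (intro subsetI)
    fix i assume "i \<in> {i\<in>{0..N}. continuum_position c N i \<le> T - 2 * e}"
    then have i: "i \<le> N" and "continuum_position c N i \<le> T - 2 * e"
      by auto
    moreover from close[OF N i] have "- X N i \<le> continuum_position c N i + e"
      by (simp add: e_def abs_le_iff)
    ultimately have "- X N i < T"
      using \<open>e > 0\<close> by linarith
    with i assms(2) show "i \<in> {i\<in>{0..N}. R (- X N i)}"
      by simp
  qed
  show "{i\<in>{0..N}. R (- X N i)} \<subseteq> {i\<in>{0..N}. continuum_position c N i \<le> T + e}"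
  proof (intro subsetI)
    fix i assume "i \<in> {i\<in>{0..N}. R (- X N i)}"
    then have i: "i \<le> N" and "- X N i \<le> T"
      using assms(3) by auto
    with close[OF N i] show "i \<in> {i\<in>{0..N}. continuum_position c N i \<le> T + e}"
      by (simp add: e_def abs_le_iff)
  qed
qed

lemma fraction_in_interval_tendsto:
  assumes ab: "a \<le> b" "b \<le> 0"
  shows "((\<lambda>N. card {i\<in>{0..N}. X N i \<in> {a..b}} / real N)
           \<longlongrightarrow> limit_mass c (-a) - limit_mass c (-b)) sequentially"
proof -
  define A where "A N = {i\<in>{0..N}. - X N i \<le> -a}" for N
  define B where "B N = {i\<in>{0..N}. - X N i < -b}" for N
  have split: "card {i\<in>{0..N}. X N i \<in> {a..b}} / real N = card (A N) / real N - card (B N) / real N"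
    for N
  proof -
    have "{i\<in>{0..N}. X N i \<in> {a..b}} = A N - B N" and "B N \<subseteq> A N"
      using ab by (auto simp: A_def B_def)
    moreover have "finite (A N)"
      by (simp add: A_def)
    ultimately have "card {i\<in>{0..N}. X N i \<in> {a..b}} = card (A N) - card (B N)"
      and "card (B N) \<le> card (A N)"
      by (simp_all add: card_Diff_subset finite_subset card_mono)
    then show ?thesis
      by (simp add: of_nat_diff diff_divide_distrib)
  qed
  have "((\<lambda>N. card (A N) / real N) \<longlongrightarrow> limit_mass c (-a)) sequentially"
    unfolding A_def using ab by (intro card_fraction_below_tendsto) auto
  moreover have "((\<lambda>N. card (B N) / real N) \<longlongrightarrow> limit_mass c (-b)) sequentially"
    unfolding B_def using ab by (intro card_fraction_below_tendsto) auto
  ultimately show ?thesis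
    unfolding split by (rule tendsto_diff)
qed

lemma is_fp_density_fixed_point_density: "is_fp_density L X (fixed_point_density c)"
  unfolding is_fp_density_def
proof (intro allI impI conjI)
  fix a b :: real assume "-L \<le> a" "a \<le> b" "b \<le> 0"
  then have integral: "(fixed_point_density c has_integral limit_mass c (-a) - limit_mass c (-b)) {a..b}"
    by (intro fixed_point_density_has_integral)
  then show "fixed_point_density c integrable_on {a..b}"
    by blast
  from integral \<open>a \<le> b\<close> \<open>b \<le> 0\<close> fraction_in_interval_tendsto
  show "((\<lambda>N. card {i\<in>{0..N}. X N i \<in> {a..b}} / real N)
          \<longlongrightarrow> integral {a..b} (fixed_point_density c)) sequentially"
    by (simp add: integral_unique)
qed

lemma last_particle_tendsto: "((\<lambda>N. X N N) \<longlongrightarrow> - 2 / sqrt c) sequentially"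
proof -
  have "((\<lambda>N. X N N - (- 2 / sqrt c)) \<longlongrightarrow> 0) sequentially"
  proof (rule Lim_null_comparison)
    show "\<forall>\<^sub>F N in sequentially. norm (X N N - (- 2 / sqrt c)) \<le> 4 / sqrt (c * real N)"
      unfolding eventually_sequentially
      using close continuum_position_last[OF c] by (intro exI[of _ 1]) (fastforce simp: abs_minus_commute)
  qed (rule tendsto_inverse_sqrt_scaled[OF c])
  then show ?thesis
    by (rule LIM_zero_cancel)
qed

end

theorem theorem2:
  fixes L c :: real and X :: "nat \<Rightarrow> nat \<Rightarrow> real"
  assumes "L > 0"
    and "c > 4 / L^2"
    and "\<And>N. N \<ge> 1 \<Longrightarrow> is_fixed_point N L (c * real N) (X N)"
  shows "(\<forall>\<^sub>F N in sequentially. X N N > -L)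
     \<and> ((\<lambda>N. X N N) \<longlongrightarrow> - 2 / sqrt c) sequentially
     \<and> (\<exists>\<rho>. is_fp_density L X \<rho>
           \<and> (\<forall>x\<in>{-L..< - 2 / sqrt c}. \<rho> x = 0)
           \<and> \<not> (\<exists>k. AE x in lborel. x \<in> {- 2 / sqrt c<..<0} \<longrightarrow> \<rho> x = k))"
proof -
  have "4 / L^2 > 0"
    using assms(1) by simp
  with assms(2) have c: "c > 0"
    by linarith
  from assms(1,2) have L: "2 / sqrt c < L"
    by (rule two_div_sqrt_less)
  have fp: "X N N > -L" "\<And>i. i \<le> N \<Longrightarrow>
      - X N i = (sqrt_harmonic N - sqrt_harmonic (N - i)) / sqrt (c * real N)" if "N \<ge> 1" for N
    using fixed_point_scaled_force[OF c L that assms(3)[OF that]] by auto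
  have close: "\<bar>- X N i - continuum_position c N i\<bar> \<le> 4 / sqrt (c * real N)"
    if "N \<ge> 1" "i \<le> N" for N i
    using fp(2)[OF that] continuum_position_approx[OF c that(1)] by simp
  have "\<not> (\<exists>k. AE x in lborel. x \<in> {- 2 / sqrt c<..<0} \<longrightarrow> fixed_point_density c x = k)"
    using c strict_mono_on_fixed_point_density not_AE_eq_const_if_strict_mono_on[of "- 2 / sqrt c" 0]
    by auto
  then show ?thesis
    using fp(1) last_particle_tendsto[OF c close] is_fp_density_fixed_point_density[OF c close]
      fixed_point_density_eq_0[OF c]
    unfolding eventually_sequentially
    by (intro conjI exI[of _ 1] exI[of _ "fixed_point_density c"]) auto
qed

end
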